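(* Let $n\ge2$ and let $X_1,\dots,X_n$ be operators in a complex Hilbert space $\mathcal{H}$, each Hermitian or skew-Hermitian, defined on a common invariant domain $D$. Let $m^{(1)},\dots,m^{(n)}$ be sequences of positive numbers satisfying (A0), (A1), (A2). Suppose that for every $j\in\{1,\dots,n-1\}$ the pair $(m^{(j)},m^{(n)})$ satisfies (A3) and $[X_j,X_n]=c_jI$ on $D$ for some $c_j\in\mathbb{C}$. Put $\mathbf{X}=(X_1,\dots,X_n)$, $\mathbf{X}'=(X_1,\dots,X_{n-1})$, $\mathbf{m}=(m^{(1)},\dots,m^{(n)})$, $\mathbf{m}'=(m^{(1)},\dots,m^{(n-1)})$. Then $u\in D$ belongs to $\mathcal{S}_{\mathbf{m}}(\mathbf{X})$ if and only if $u\in\mathcal{S}_{\mathbf{m}'}(\mathbf{X}')\cap\mathcal{S}_{m^{(n)}}(X_n)$.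
   Context: A common invariant domain $D$ means $D\subset\mathrm{Dom}(X_j)$ and $X_jD\subset D$ for all $j$. Notation: for $N\ge1$, $M(N)=\bigcup_{k\ge1}\{1,\dots,N\}^k$; for $\alpha=(i_1,\dots,i_k)\in M(N)$, $|\alpha|=k$, $|\alpha|_j=\mathrm{card}\{l: i_l=j\}$. For operators $\mathbf{Y}=(Y_1,\dots,Y_N)$, $\mathbf{Y}_\alpha=Y_{i_1}\cdots Y_{i_k}$ and $C^\infty(\mathbf{Y})=\{u: u\in\mathrm{Dom}(\mathbf{Y}_\alpha)\ \forall\alpha\in M(N)\}$. For sequences $\mathbf{p}=(p^{(1)},\dots,p^{(N)})$ of positive reals, $\mathbf{p}_\alpha=p^{(1)}_{|\alpha|_1}\cdots p^{(N)}_{|\alpha|_N}$ and $\mathcal{S}_{\mathbf{p}}(\mathbf{Y})=\{u\in C^\infty(\mathbf{Y}): \exists A,C>0,\ \|\mathbf{Y}_\alpha u\|\le CA^{|\alpha|}\mathbf{p}_\alpha\ \forall\alpha\in M(N)\}$ (for $N=1$: $\|Y^ku\|\le CA^kp_k$ for all $k\ge1$). Conditions: (A0) $m^{(j)}_0=m^{(j)}_1=1$; (A1) $(m^{(j)}_p)^2\le m^{(j)}_{p-1}m^{(j)}_{p+1}$ for $p\ge1$; (A2) there is $H>0$ with $m^{(j)}_{p+q}\le H^{p+q}m^{(j)}_pm^{(j)}_q$ for all $j$, $p,q\in\mathbb{N}$. A pair $(m^{(j)},m^{(k)})$ satisfies (A3) if there is $L\ge1$ with $p\,m^{(j)}_{p-1}m^{(k)}_{p-1}\le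 L\,m^{(j)}_pm^{(k)}_p$ for all $p\ge1$. *)

theory Defs
  imports "HOL-Analysis.Analysis"
begin

text \<open>The distribution has no complex inner-product spaces, so we introduce the
standard notion as a type class: a complete real normed vector space with a
compatible complex scalar multiplication and a complex inner product
(linear in the second, conjugate-linear in the first argument) inducing the norm.\<close>

class complex_hilbert = real_normed_vector + complete_space +
  fixes scaleC :: "complex \<Rightarrow> 'a \<Rightarrow> 'a"
    and cinner :: "'a \<Rightarrow> 'a \<Rightarrow> complex"
  assumes scaleC_add_right: "scaleC a (x + y) = scaleC a x + scaleC a y"
    and scaleC_add_left: "scaleC (a + b) x = scaleC a x + scaleC b x"
    and scaleC_scaleC: "scaleC a (scaleC b x) = scaleC (a * b) x"
    and scaleC_one: "scaleC 1 x = x"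
    and scaleR_scaleC: "scaleR r x = scaleC (complex_of_real r) x"
    and cinner_commute: "cinner x y = cnj (cinner y x)"
    and cinner_add_left: "cinner (x + y) z = cinner x z + cinner y z"
    and cinner_scaleC_left: "cinner (scaleC a x) y = cnj a * cinner x y"
    and cinner_self_real: "Im (cinner x x) = 0"
    and cinner_self_nonneg: "0 \<le> Re (cinner x x)"
    and cinner_self_eq_zero: "cinner x x = 0 \<longleftrightarrow> x = 0"
    and norm_eq_sqrt_cinner: "norm x = sqrt (Re (cinner x x))"

text \<open>An operator is a map \<open>T\<close> together with its domain \<open>DT\<close>; only the values on
\<open>DT\<close> matter.\<close>

definition linear_op :: "('a::complex_hilbert \<Rightarrow> 'a) \<Rightarrow> 'a set \<Rightarrow> bool" where
  "linear_op T DT \<longleftrightarrow> 0 \<in> DT \<and>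
     (\<forall>x\<in>DT. \<forall>y\<in>DT. x + y \<in> DT \<and> T (x + y) = T x + T y) \<and>
     (\<forall>c. \<forall>x\<in>DT. scaleC c x \<in> DT \<and> T (scaleC c x) = scaleC c (T x))"

definition hermitian_op :: "('a::complex_hilbert \<Rightarrow> 'a) \<Rightarrow> 'a set \<Rightarrow> bool" where
  "hermitian_op T DT \<longleftrightarrow> linear_op T DT \<and>
     (\<forall>x\<in>DT. \<forall>y\<in>DT. cinner (T x) y = cinner x (T y))"

definition skew_hermitian_op :: "('a::complex_hilbert \<Rightarrow> 'a) \<Rightarrow> 'a set \<Rightarrow> bool" where
  "skew_hermitian_op T DT \<longleftrightarrow> linear_op T DT \<and>
     (\<forall>x\<in>DT. \<forall>y\<in>DT. cinner (T x) y = - cinner x (T y))"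

text \<open>A multi-index \<open>\<alpha> = (i\<^sub>1,\<dots>,i\<^sub>k) \<in> M(N)\<close> is a nonempty list with entries
in \<open>{1..N}\<close>. \<open>Y\<^sub>\<alpha> = Y\<^bsub>i\<^sub>1\<^esub> \<cdots> Y\<^bsub>i\<^sub>k\<^esub>\<close>, so \<open>Y\<^bsub>i\<^sub>k\<^esub>\<close> acts first.\<close>

definition multi_indices :: "nat \<Rightarrow> nat list set" where
  "multi_indices N = {\<alpha>. \<alpha> \<noteq> [] \<and> set \<alpha> \<subseteq> {1..N}}"

fun op_word :: "(nat \<Rightarrow> 'a \<Rightarrow> 'a) \<Rightarrow> nat list \<Rightarrow> 'a \<Rightarrow> 'a" where
  "op_word Y [] u = u"
| "op_word Y (i # \<alpha>) u = Y i (op_word Y \<alpha> u)"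

fun in_dom_word :: "(nat \<Rightarrow> 'a \<Rightarrow> 'a) \<Rightarrow> (nat \<Rightarrow> 'a set) \<Rightarrow> nat list \<Rightarrow> 'a \<Rightarrow> bool" where
  "in_dom_word Y DY [] u = True"
| "in_dom_word Y DY (i # \<alpha>) u = (in_dom_word Y DY \<alpha> u \<and> op_word Y \<alpha> u \<in> DY i)"

definition C_inf :: "nat \<Rightarrow> (nat \<Rightarrow> 'a \<Rightarrow> 'a) \<Rightarrow> (nat \<Rightarrow> 'a set) \<Rightarrow> 'a set" where
  "C_inf N Y DY = {u. \<forall>\<alpha>\<in>multi_indices N. in_dom_word Y DY \<alpha> u}"

text \<open>\<open>|\<alpha>|\<^sub>j\<close> and \<open>p\<^sub>\<alpha> = p\<^sup>(\<^sup>1\<^sup>)\<^bsub>|\<alpha>|\<^sub>1\<^esub> \<cdots> p\<^sup>(\<^sup>N\<^sup>)\<^bsub>|\<alpha>|\<^sub>N\<^esub>\<close>; \<open>p j k\<close> stands for \<open>p\<^sup>(\<^sup>j\<^sup>)\<^sub>k\<close>.\<close>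
definition count_idx :: "nat list \<Rightarrow> nat \<Rightarrow> nat" where
  "count_idx \<alpha> j = length (filter (\<lambda>i. i = j) \<alpha>)"

definition seq_weight :: "nat \<Rightarrow> (nat \<Rightarrow> nat \<Rightarrow> real) \<Rightarrow> nat list \<Rightarrow> real" where
  "seq_weight N p \<alpha> = (\<Prod>j=1..N. p j (count_idx \<alpha> j))"

definition S_space :: "nat \<Rightarrow> (nat \<Rightarrow> nat \<Rightarrow> real) \<Rightarrow> (nat \<Rightarrow> 'a::complex_hilbert \<Rightarrow> 'a)
                       \<Rightarrow> (nat \<Rightarrow> 'a set) \<Rightarrow> 'a set" where
  "S_space N p Y DY = {u \<in> C_inf N Y DY. \<exists>A>0. \<exists>C>0. \<forall>\<alpha>\<in>multi_indices N.
      norm (op_word Y \<alpha> u) \<le> C * A ^ length \<alpha> * seq_weight N p \<alpha>}"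

definition cond_A0 :: "(nat \<Rightarrow> real) \<Rightarrow> bool" where
  "cond_A0 m \<longleftrightarrow> m 0 = 1 \<and> m 1 = 1"

definition cond_A1 :: "(nat \<Rightarrow> real) \<Rightarrow> bool" where
  "cond_A1 m \<longleftrightarrow> (\<forall>p\<ge>1. (m p)\<^sup>2 \<le> m (p - 1) * m (p + 1))"

definition cond_A2 :: "nat \<Rightarrow> (nat \<Rightarrow> nat \<Rightarrow> real) \<Rightarrow> bool" where
  "cond_A2 N m \<longleftrightarrow> (\<exists>H>0. \<forall>j\<in>{1..N}. \<forall>p q. m j (p + q) \<le> H ^ (p + q) * m j p * m j q)"

definition cond_A3 :: "(nat \<Rightarrow> real) \<Rightarrow> (nat \<Rightarrow> real) \<Rightarrow> bool" where
  "cond_A3 mj mk \<longleftrightarrow> (\<exists>L\<ge>1. \<forall>p\<ge>1. real p * mj (p - 1) * mk (p - 1) \<le> L * mj p * mk p)"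

end

theory Submission
  imports Defs "HOL-Library.Multiset"
begin

text \<open>The inclusion \<open>\<subseteq>\<close> only needs (A0). For the converse write
\<open>\<parallel>X\<^sub>\<alpha> u\<parallel>\<^sup>2 = |\<langle>u, X\<^bsub>rev \<alpha>\<^esub> X\<^sub>\<alpha> u\<rangle>|\<close> and move every \<open>X\<^sub>j\<close>, \<open>j < n\<close>, to the left factor,
where it acts as its own adjoint up to sign, and every \<open>X\<^sub>n\<close> to the right. Each time an
\<open>X\<^sub>n\<close> passes an \<open>X\<^sub>j\<close> the commutator \<open>c\<^sub>j\<close> deletes both letters. What remains are at
most \<open>2\<^bsup>2|\<alpha>|\<^esup>\<close> families of pairings \<open>|\<langle>X\<^sub>\<beta> u, X\<^sub>n\<^sup>k u\<rangle>| \<le> \<parallel>X\<^sub>\<beta> u\<parallel> \<parallel>X\<^sub>n\<^sup>k u\<parallel>\<close>; the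
factorials counting the choices of contraction partners are absorbed by (A3), the weights
are merged by the log-convexity (A1), and (A2) halves the doubled indices, which yields a
bound geometric in \<open>|\<alpha>|\<close>.\<close>

section \<open>Complex inner products\<close>

lemma cinner_zero_left [simp]: "cinner 0 (y::'a::complex_hilbert) = 0"
  using cinner_add_left[of 0 0 y] by simp

lemma cinner_add_right: "cinner (x::'a::complex_hilbert) (y + z) = cinner x y + cinner x z"
  by (metis cinner_add_left cinner_commute complex_cnj_add)

lemma cinner_scaleC_right: "cinner (x::'a::complex_hilbert) (scaleC a y) = a * cinner x y"
  by (metis cinner_commute cinner_scaleC_left complex_cnj_cnj complex_cnj_mult)

lemma scaleC_zero_left [simp]: "scaleC 0 (x::'a::complex_hilbert) = 0"
  using scaleR_scaleC[of 0 x] by simp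

lemma cinner_zero_right [simp]: "cinner (x::'a::complex_hilbert) 0 = 0"
  using cinner_commute[of x 0] by simp

lemma scaleC_minus_one_left: "scaleC (-1) x = - (x::'a::complex_hilbert)"
  using scaleR_scaleC[of "-1" x] by simp

lemma cinner_diff_left: "cinner (x - y) z = cinner (x::'a::complex_hilbert) z - cinner y z"
  using cinner_add_left[of x "-y" z] cinner_scaleC_left[of "-1" y z]
  by (simp add: scaleC_minus_one_left)

lemma cinner_diff_right: "cinner (x::'a::complex_hilbert) (y - z) = cinner x y - cinner x z"
  using cinner_add_right[of x y "-z"] cinner_scaleC_right[of x "-1" z]
  by (simp add: scaleC_minus_one_left)

lemma cinner_sum_right: "cinner (x::'a::complex_hilbert) (sum f I) = (\<Sum>i\<in>I. cinner x (f i))"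
  by (induction I rule: infinite_finite_induct) (auto simp: cinner_add_right)

lemma cinner_self: "cinner x x = of_real ((norm (x::'a::complex_hilbert))\<^sup>2)"
  using cinner_self_real[of x] cinner_self_nonneg[of x] norm_eq_sqrt_cinner[of x]
  by (simp add: complex_eq_iff)

lemma norm_cinner_le: "cmod (cinner x y) \<le> norm (x::'a::complex_hilbert) * norm y"
proof (cases "y = 0")
  case True
  then show ?thesis by simp
next
  case False
  define N where "N = (norm y)\<^sup>2"
  define z where "z = cinner y x"
  have N: "N > 0" using False by (simp add: N_def)
  have "cinner (scaleC (of_real N) x - scaleC z y) (scaleC (of_real N) x - scaleC z y)
      = of_real (N * (N * (norm x)\<^sup>2 - (cmod z)\<^sup>2))"
  proof -
    have "cinner x y = cnj z" by (simp add: z_def cinner_commute[of x y])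
    moreover have "cinner y y = of_real N" by (simp add: N_def cinner_self)
    moreover have "z * cnj z = of_real ((cmod z)\<^sup>2)" by (rule complex_norm_square[symmetric])
    ultimately show ?thesis
      by (simp add: cinner_diff_left cinner_diff_right cinner_scaleC_left cinner_scaleC_right
          cinner_self[of x] z_def[symmetric] algebra_simps power2_eq_square)
  qed
  then have "0 \<le> N * (N * (norm x)\<^sup>2 - (cmod z)\<^sup>2)"
    by (metis Re_complex_of_real cinner_self_nonneg)
  then have "(cmod z)\<^sup>2 \<le> (norm x * norm y)\<^sup>2"
    using N by (simp add: zero_le_mult_iff N_def power_mult_distrib mult.commute)
  then have "cmod z \<le> norm x * norm y"
    by (rule power2_le_imp_le) simp
  then show ?thesis
    by (metis z_def cinner_commute complex_mod_cnj)
qed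

section \<open>Commuting \<open>X\<^sub>n\<close> through words\<close>

fun remove_nth :: "nat \<Rightarrow> 'b list \<Rightarrow> 'b list" where
  "remove_nth p [] = []"
| "remove_nth 0 (x # xs) = xs"
| "remove_nth (Suc p) (x # xs) = x # remove_nth p xs"

lemma set_remove_nth_subset: "set (remove_nth p w) \<subseteq> set w"
  by (induction p w rule: remove_nth.induct) auto

lemma length_remove_nth: "p < length w \<Longrightarrow> length (remove_nth p w) = length w - 1"
  by (induction p w rule: remove_nth.induct) auto

lemma mset_remove_nth: "p < length w \<Longrightarrow> mset (remove_nth p w) = mset w - {#w ! p#}"
  by (induction p w rule: remove_nth.induct) auto

lemma op_word_append: "op_word Y (xs @ ys) v = op_word Y xs (op_word Y ys v)"
  by (induction xs) auto

lemma op_word_const: "op_word (\<lambda>_. Z) \<alpha> v = op_word Y (replicate (length \<alpha>) j) v" if "Z = Y j"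
  using that by (induction \<alpha>) auto

definition commutator_coeff :: "nat \<Rightarrow> (nat \<Rightarrow> 'b::zero) \<Rightarrow> nat list \<Rightarrow> nat \<Rightarrow> 'b" where
  "commutator_coeff n c w p = (if w ! p = n then 0 else c (w ! p))"

lemma commutator_coeff_Cons_0 [simp]: "commutator_coeff n c (y # w) 0 = (if y = n then 0 else c y)"
  by (simp add: commutator_coeff_def)

lemma commutator_coeff_Cons_Suc [simp]: "commutator_coeff n c (y # w) (Suc p) = commutator_coeff n c w p"
  by (simp add: commutator_coeff_def)

lemma norm_commutator_coeff: "norm (commutator_coeff n c w p) = commutator_coeff n (\<lambda>j. norm (c j)) w p"
  by (simp add: commutator_coeff_def)

locale central_commutators =
  fixes n :: nat and X :: "nat \<Rightarrow> 'a::complex_hilbert \<Rightarrow> 'a" and DX :: "nat \<Rightarrow> 'a set"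
    and D :: "'a set" and c :: "nat \<Rightarrow> complex"
  assumes n_pos: "n \<ge> 1"
    and herm: "\<forall>j\<in>{1..n}. hermitian_op (X j) (DX j) \<or> skew_hermitian_op (X j) (DX j)"
    and D_sub: "\<forall>j\<in>{1..n}. D \<subseteq> DX j"
    and D_inv: "\<forall>j\<in>{1..n}. X j ` D \<subseteq> D"
    and comm: "\<forall>j\<in>{1..n-1}. \<forall>v\<in>D. X j (X n v) - X n (X j v) = scaleC (c j) v"
begin

lemma linear_X: "j \<in> {1..n} \<Longrightarrow> linear_op (X j) (DX j)"
  using herm unfolding hermitian_op_def skew_hermitian_op_def by blast

lemma X_in_D: "j \<in> {1..n} \<Longrightarrow> v \<in> D \<Longrightarrow> X j v \<in> D"
  using D_inv by blast

lemma D_in_DX: "j \<in> {1..n} \<Longrightarrow> v \<in> D \<Longrightarrow> v \<in> DX j"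
  using D_sub by blast

lemma op_word_in_D: "set w \<subseteq> {1..n} \<Longrightarrow> v \<in> D \<Longrightarrow> op_word X w v \<in> D"
  by (induction w) (auto intro: X_in_D)

lemma in_dom_word_X: "set w \<subseteq> {1..n} \<Longrightarrow> v \<in> D \<Longrightarrow> in_dom_word X DX w v"
  by (induction w) (auto simp: D_in_DX op_word_in_D)

lemma X_diff_sum:
  assumes j: "j \<in> {1..n}" and v: "v \<in> D" and "finite I" and f: "\<forall>i\<in>I. f i \<in> D"
  shows "X j (v - (\<Sum>i\<in>I. scaleC (a i) (f i))) = X j v - (\<Sum>i\<in>I. scaleC (a i) (X j (f i)))"
proof -
  have lin: "linear_op (X j) (DX j)" by (rule linear_X[OF j])
  then have add: "\<And>x y. x \<in> DX j \<Longrightarrow> y \<in> DX j \<Longrightarrow> x + y \<in> DX j \<and> X j (x + y) = X j x + X j y"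
    and scale: "\<And>a x. x \<in> DX j \<Longrightarrow> scaleC a x \<in> DX j \<and> X j (scaleC a x) = scaleC a (X j x)"
    and zero: "0 \<in> DX j"
    unfolding linear_op_def by blast+
  have X_zero: "X j 0 = 0"
    using scale[OF zero, of 0] by simp
  have minus: "- x \<in> DX j \<and> X j (- x) = - X j x" if "x \<in> DX j" for x
    using scale[OF that, of "-1"] by (simp add: scaleC_minus_one_left)
  have sum: "(\<Sum>i\<in>I. scaleC (a i) (f i)) \<in> DX j \<and>
      X j (\<Sum>i\<in>I. scaleC (a i) (f i)) = (\<Sum>i\<in>I. scaleC (a i) (X j (f i)))"
    using assms(3) f
  proof (induction I rule: finite_induct)
    case empty
    then show ?case using zero X_zero by simp
  next
    case (insert i I)
    then have "scaleC (a i) (f i) \<in> DX j \<and> X j (scaleC (a i) (f i)) = scaleC (a i) (X j (f i))"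
      using scale D_in_DX[OF j] by blast
    with insert add show ?case by simp
  qed
  show ?thesis
    using add[OF D_in_DX[OF j v] conjunct1[OF minus[OF conjunct1[OF sum]]]] minus[OF conjunct1[OF sum]] sum
    by simp
qed

lemma cmod_cinner_X:
  assumes j: "j \<in> {1..n}" and "x \<in> D" "y \<in> D"
  shows "cmod (cinner (X j x) y) = cmod (cinner x (X j y))"
proof -
  have "x \<in> DX j" "y \<in> DX j" using assms D_in_DX by auto
  with herm j show ?thesis
    unfolding hermitian_op_def skew_hermitian_op_def by (metis norm_minus_cancel)
qed

lemma cmod_cinner_op_word:
  "set w \<subseteq> {1..n} \<Longrightarrow> x \<in> D \<Longrightarrow> y \<in> D \<Longrightarrow>
   cmod (cinner (op_word X w x) y) = cmod (cinner x (op_word X (rev w) y))"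
proof (induction w arbitrary: y)
  case (Cons i w)
  then have "cmod (cinner (op_word X (i # w) x) y) = cmod (cinner (op_word X w x) (X i y))"
    by (simp add: cmod_cinner_X op_word_in_D)
  with Cons show ?case by (simp add: X_in_D op_word_append)
qed simp

lemma X_n_op_word:
  assumes "set w \<subseteq> {1..n}" "v \<in> D"
  shows "X n (op_word X w v) = op_word X w (X n v)
           - (\<Sum>p<length w. scaleC (commutator_coeff n c w p) (op_word X (remove_nth p w) v))"
  using assms
proof (induction w arbitrary: v)
  case Nil
  then show ?case by simp
next
  case (Cons y ys)
  have y: "y \<in> {1..n}" and ys: "set ys \<subseteq> {1..n}" and n: "n \<in> {1..n}"
    using Cons.prems n_pos by auto
  define t where "t = op_word X ys v"
  have t: "t \<in> D" unfolding t_def using op_word_in_D[OF ys Cons.prems(2)] .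
  have removed: "\<forall>p\<in>{..<length ys}. op_word X (remove_nth p ys) v \<in> D"
    using op_word_in_D set_remove_nth_subset ys Cons.prems(2) by (meson subset_trans)
  have shifted: "op_word X ys (X n v) \<in> D"
    using op_word_in_D[OF ys X_in_D[OF n Cons.prems(2)]] .
  have X_y: "X y (X n t) = op_word X (y # ys) (X n v)
      - (\<Sum>p<length ys. scaleC (commutator_coeff n c ys p) (X y (op_word X (remove_nth p ys) v)))"
    using Cons.IH[OF ys Cons.prems(2)] X_diff_sum[OF y shifted _ removed] by (simp add: t_def)
  have sum_Cons: "(\<Sum>p<length (y # ys). scaleC (commutator_coeff n c (y # ys) p) (op_word X (remove_nth p (y # ys)) v))
      = scaleC (commutator_coeff n c (y # ys) 0) t
        + (\<Sum>p<length ys. scaleC (commutator_coeff n c ys p) (X y (op_word X (remove_nth p ys) v)))"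
    unfolding length_Cons sum.lessThan_Suc_shift by (simp add: t_def)
  show ?case
  proof (cases "y = n")
    case True
    then show ?thesis using X_y sum_Cons by (simp add: t_def)
  next
    case False
    then have "X y (X n t) - X n (X y t) = scaleC (c y) t" using comm y t by auto
    then show ?thesis using X_y sum_Cons False by (simp add: t_def algebra_simps)
  qed
qed

end

section \<open>The contraction bound\<close>

definition falling_factorial :: "nat \<Rightarrow> nat \<Rightarrow> real" where
  "falling_factorial z r = real (z choose r) * fact r"

lemma falling_factorial_0 [simp]: "falling_factorial z 0 = 1"
  by (simp add: falling_factorial_def)

lemma falling_factorial_Suc_Suc:
  "falling_factorial (Suc z) (Suc r) = falling_factorial z (Suc r) + real (Suc r) * falling_factorial z r"
  unfolding falling_factorial_def by (simp add: algebra_simps)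

lemma falling_factorial_le: "falling_factorial z r \<le> 2 ^ z * fact r"
proof -
  have "real (z choose r) \<le> 2 ^ z"
    using binomial_le_pow2[of z r] by (metis of_nat_le_iff of_nat_numeral of_nat_power)
  then show ?thesis unfolding falling_factorial_def by (intro mult_right_mono) auto
qed

text \<open>An upper bound for \<open>|\<langle>X\<^sub>\<beta> u, X\<^sub>w X\<^sub>n\<^sup>k u\<rangle>|\<close> obtained by eliminating the word \<open>w\<close>:
every letter \<open>x \<noteq> n\<close> of \<open>w\<close> is either moved to the left factor (collected in \<open>B\<close>) or
contracted (collected in \<open>R\<close>) against one of the \<open>z\<close> letters \<open>n\<close> of \<open>w\<close>, at the cost
\<open>cw x\<close>. \<open>falling_factorial z |R|\<close> counts the ways to choose the partners of the
contracted letters, which no longer contribute to the final power of \<open>X\<^sub>n\<close>.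
\<open>P B K\<close> bounds the remaining pairings \<open>|\<langle>X\<^sub>B u, X\<^sub>n\<^sup>K u\<rangle>|\<close>. The truncated
subtraction \<open>k + z - |R|\<close> is harmless, since \<open>falling_factorial z |R| = 0\<close> for \<open>|R| > z\<close>.\<close>
fun contraction_bound ::
  "nat \<Rightarrow> (nat \<Rightarrow> real) \<Rightarrow> (nat multiset \<Rightarrow> nat \<Rightarrow> real) \<Rightarrow> nat multiset \<Rightarrow> nat \<Rightarrow> nat
    \<Rightarrow> nat list \<Rightarrow> nat multiset \<Rightarrow> real" where
  "contraction_bound n cw P B k z [] R =
     falling_factorial z (size R) * prod_mset (image_mset cw R) * P B (k + z - size R)"
| "contraction_bound n cw P B k z (x # w) R =
     (if x = n then contraction_bound n cw P B k z w R
      else contraction_bound n cw P (add_mset x B) k z w R + contraction_bound n cw P B k z w (add_mset x R))"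

lemma prod_mset_image_nonneg:
  "(\<And>x. x \<in># R \<Longrightarrow> f x \<ge> 0) \<Longrightarrow> prod_mset (image_mset f R) \<ge> (0::real)"
  by (induction R) auto

lemma prod_mset_image_le_power:
  "(\<And>x. x \<in># R \<Longrightarrow> 0 \<le> f x \<and> f x \<le> b) \<Longrightarrow> prod_mset (image_mset f R) \<le> (b::real) ^ size R"
proof (induction R)
  case (add x R)
  then have "0 \<le> f x" "f x \<le> b" by auto
  with add show ?case by (auto intro!: mult_mono prod_mset_image_nonneg order.trans[of 0 "f x" b])
qed simp

lemma sum_mset_add_mset_remove:
  "(\<Sum>x\<in>#add_mset y R. f x (add_mset y R - {#x#})) = f y R + (\<Sum>x\<in>#R. f x (add_mset y (R - {#x#})))"
proof -
  have "add_mset y R - {#x#} = add_mset y (R - {#x#})" if "x \<in># R" for x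
    using that by (metis add_mset_commute add_mset_remove_trivial insert_DiffM)
  then have "(\<Sum>x\<in>#R. f x (add_mset y R - {#x#})) = (\<Sum>x\<in>#R. f x (add_mset y (R - {#x#})))"
    by (intro arg_cong[where f = sum_mset] image_mset_cong) simp
  then show ?thesis by simp
qed

lemma contraction_bound_Nil_Suc:
  "contraction_bound n cw P B k (Suc z) [] R = contraction_bound n cw P B (Suc k) z [] R
     + (\<Sum>x\<in>#R. cw x * contraction_bound n cw P B k z [] (R - {#x#}))"
proof (cases "size R")
  case 0
  then show ?thesis by simp
next
  case (Suc r)
  define W where "W = prod_mset (image_mset cw R)"
  define T where "T = P B (k + z - r)"
  have summand: "cw x * contraction_bound n cw P B k z [] (R - {#x#}) = falling_factorial z r * W * T"
    if "x \<in># R" for x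
  proof -
    have "cw x * prod_mset (image_mset cw (R - {#x#})) = W"
      unfolding W_def using that by (metis insert_DiffM image_mset_add_mset prod_mset.add_mset)
    moreover have "size (R - {#x#}) = r" using that Suc by (simp add: size_Diff_singleton)
    ultimately show ?thesis by (simp add: T_def)
  qed
  have "(\<Sum>x\<in>#R. cw x * contraction_bound n cw P B k z [] (R - {#x#}))
      = (\<Sum>x\<in>#R. falling_factorial z r * W * T)"
    by (intro arg_cong[where f = sum_mset] image_mset_cong summand)
  with Suc show ?thesis
    by (simp add: W_def T_def falling_factorial_Suc_Suc algebra_simps)
qed

text \<open>The recursion mirrors \<open>X\<^sub>n X\<^sub>w = X\<^sub>w X\<^sub>n - \<Sum>\<^sub>p c\<^bsub>w\<^sub>p\<^esub> X\<^bsub>w - w\<^sub>p\<^esub>\<close> at the level of the bound.\<close>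
lemma contraction_bound_Suc:
  "contraction_bound n cw P B k (Suc z) w R = contraction_bound n cw P B (Suc k) z w R
     + (\<Sum>x\<in>#R. cw x * contraction_bound n cw P B k z w (R - {#x#}))
     + (\<Sum>p<length w. commutator_coeff n cw w p * contraction_bound n cw P B k z (remove_nth p w) R)"
proof (induction w arbitrary: B R)
  case Nil
  then show ?case using contraction_bound_Nil_Suc by simp
next
  case (Cons y w)
  let ?F = "contraction_bound n cw P"
  let ?a = "commutator_coeff n cw w"
  have shift: "(\<Sum>p<length (y # w). commutator_coeff n cw (y # w) p * ?F B k z (remove_nth p (y # w)) R)
      = commutator_coeff n cw (y # w) 0 * ?F B k z w R
        + (\<Sum>p<length w. ?a p * ?F B k z (y # remove_nth p w) R)"
    unfolding length_Cons sum.lessThan_Suc_shift by simp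
  show ?case
  proof (cases "y = n")
    case True
    then show ?thesis using Cons.IH[of B R] shift by simp
  next
    case False
    have sum_w: "(\<Sum>p<length (y # w). commutator_coeff n cw (y # w) p * ?F B k z (remove_nth p (y # w)) R)
      = cw y * ?F B k z w R + (\<Sum>p<length w. ?a p * ?F (add_mset y B) k z (remove_nth p w) R)
         + (\<Sum>p<length w. ?a p * ?F B k z (remove_nth p w) (add_mset y R))"
      unfolding shift using False by (simp add: sum.distrib distrib_left)
    have sum_R: "(\<Sum>x\<in>#R. cw x * ?F B k z (y # w) (R - {#x#}))
       = (\<Sum>x\<in>#R. cw x * ?F (add_mset y B) k z w (R - {#x#}))
         + (\<Sum>x\<in>#R. cw x * ?F B k z w (add_mset y (R - {#x#})))"
      using False by (simp add: sum_mset.distrib distrib_left)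
    have sum_yR: "(\<Sum>x\<in>#add_mset y R. cw x * ?F B k z w (add_mset y R - {#x#}))
       = cw y * ?F B k z w R + (\<Sum>x\<in>#R. cw x * ?F B k z w (add_mset y (R - {#x#})))"
      by (rule sum_mset_add_mset_remove)
    have "?F B k (Suc z) (y # w) R = ?F (add_mset y B) k (Suc z) w R + ?F B k (Suc z) w (add_mset y R)"
      using False by simp
    also have "\<dots> = (?F (add_mset y B) (Suc k) z w R + (\<Sum>x\<in>#R. cw x * ?F (add_mset y B) k z w (R - {#x#}))
         + (\<Sum>p<length w. ?a p * ?F (add_mset y B) k z (remove_nth p w) R))
       + (?F B (Suc k) z w (add_mset y R)
         + (\<Sum>x\<in>#add_mset y R. cw x * ?F B k z w (add_mset y R - {#x#}))
         + (\<Sum>p<length w. ?a p * ?F B k z (remove_nth p w) (add_mset y R)))"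
      unfolding Cons.IH ..
    also have "\<dots> = ?F B (Suc k) z (y # w) R + (\<Sum>x\<in>#R. cw x * ?F B k z (y # w) (R - {#x#}))
       + (\<Sum>p<length (y # w). commutator_coeff n cw (y # w) p * ?F B k z (remove_nth p (y # w)) R)"
      unfolding sum_w sum_R sum_yR using False by simp
    finally show ?thesis .
  qed
qed

lemma contraction_bound_nonneg:
  assumes "\<And>x. cw x \<ge> 0" "\<And>B K. P B K \<ge> 0"
  shows "contraction_bound n cw P B k z w R \<ge> 0"
  using assms by (induction w arbitrary: B R) (auto simp: falling_factorial_def prod_mset_image_nonneg)

lemma contraction_bound_le:
  assumes "set w \<subseteq> insert n J" "set_mset B \<subseteq> J" "set_mset R \<subseteq> J"
    and term_le: "\<And>B R. set_mset B \<subseteq> J \<Longrightarrow> set_mset R \<subseteq> J \<Longrightarrow>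
        falling_factorial z (size R) * prod_mset (image_mset cw R) * P B (k + z - size R) \<le> Q (B + R)"
    and Q_nonneg: "\<And>B. Q B \<ge> 0"
  shows "contraction_bound n cw P B k z w R \<le> 2 ^ length w * Q (B + R + mset (filter (\<lambda>x. x \<noteq> n) w))"
  using assms(1-3)
proof (induction w arbitrary: B R)
  case Nil
  then show ?case using term_le by simp
next
  case (Cons y w)
  show ?case
  proof (cases "y = n")
    case True
    then have "contraction_bound n cw P B k z (y # w) R \<le> 2 ^ length w * Q (B + R + mset (filter (\<lambda>x. x \<noteq> n) w))"
      using Cons by simp
    also have "\<dots> \<le> 2 ^ length (y # w) * Q (B + R + mset (filter (\<lambda>x. x \<noteq> n) w))"
      using Q_nonneg by (simp add: mult_right_mono)
    finally show ?thesis using True by simp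
  next
    case False
    then have "y \<in> J" "set w \<subseteq> insert n J" using Cons.prems by auto
    with False Cons show ?thesis
      using add_mono[OF Cons.IH[of "add_mset y B" R] Cons.IH[of B "add_mset y R"]] by simp
  qed
qed

context central_commutators
begin

lemma X_n_power_in_D: "v \<in> D \<Longrightarrow> op_word X (replicate k n) v \<in> D"
  using n_pos by (intro op_word_in_D) auto

definition pairing :: "'a \<Rightarrow> nat list \<Rightarrow> nat list \<Rightarrow> nat \<Rightarrow> real" where
  "pairing u \<beta> w k = cmod (cinner (op_word X \<beta> u) (op_word X w (op_word X (replicate k n) u)))"

lemma norm_op_word_square:
  assumes "set \<alpha> \<subseteq> {1..n}" "u \<in> D"
  shows "(norm (op_word X \<alpha> u))\<^sup>2 = pairing u [] (rev \<alpha> @ \<alpha>) 0"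
  using cmod_cinner_op_word[OF assms op_word_in_D[OF assms]]
  by (simp add: pairing_def op_word_append cinner_self norm_power)

lemma pairing_Cons:
  assumes "u \<in> D" "y \<in> {1..n}" "set \<beta> \<subseteq> {1..n}" "set w \<subseteq> {1..n}"
  shows "pairing u \<beta> (y # w) k = pairing u (y # \<beta>) w k"
  using assms cmod_cinner_X[of y "op_word X \<beta> u" "op_word X w (op_word X (replicate k n) u)"]
  by (simp add: pairing_def op_word_in_D X_n_power_in_D)

lemma pairing_Cons_n_le:
  assumes u: "u \<in> D" and "set \<beta> \<subseteq> {1..n}" and w: "set w \<subseteq> {1..n}"
  shows "pairing u \<beta> (n # w) k \<le> pairing u \<beta> w (Suc k)
    + (\<Sum>p<length w. commutator_coeff n (\<lambda>j. cmod (c j)) w p * pairing u \<beta> (remove_nth p w) k)"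
proof -
  define v where "v = op_word X \<beta> u"
  define Z where "Z = op_word X (replicate k n) u"
  have "Z \<in> D" unfolding Z_def using X_n_power_in_D[OF u] .
  define S where "S = (\<Sum>p<length w. commutator_coeff n c w p * cinner v (op_word X (remove_nth p w) Z))"
  have "cinner v (X n (op_word X w Z)) = cinner v (op_word X w (X n Z)) - S"
    using \<open>Z \<in> D\<close> unfolding S_def
    by (simp add: X_n_op_word[OF w] cinner_diff_right cinner_sum_right cinner_scaleC_right)
  moreover have "cmod S \<le> (\<Sum>p<length w. cmod (commutator_coeff n c w p) * cmod (cinner v (op_word X (remove_nth p w) Z)))"
    unfolding S_def norm_mult[symmetric] by (rule norm_sum)
  ultimately have "cmod (cinner v (X n (op_word X w Z))) \<le> cmod (cinner v (op_word X w (X n Z)))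
      + (\<Sum>p<length w. cmod (commutator_coeff n c w p) * cmod (cinner v (op_word X (remove_nth p w) Z)))"
    using norm_triangle_ineq4[of "cinner v (op_word X w (X n Z))" S] by simp
  then show ?thesis
    by (simp add: pairing_def v_def Z_def norm_commutator_coeff)
qed

text \<open>A leading letter \<open>\<noteq> n\<close> is moved to the left factor by adjointness; a leading \<open>n\<close>
is commuted through the rest of the word.\<close>
lemma pairing_le_contraction_bound:
  assumes u: "u \<in> D"
    and base: "\<And>\<beta> k. set \<beta> \<subseteq> {1..n-1} \<Longrightarrow> pairing u \<beta> [] k \<le> P (mset \<beta>) k"
    and P_nonneg: "\<And>B K. P B K \<ge> 0"
  shows "set w \<subseteq> {1..n} \<Longrightarrow> set \<beta> \<subseteq> {1..n-1} \<Longrightarrow>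
    pairing u \<beta> w k \<le> contraction_bound n (\<lambda>j. cmod (c j)) P (mset \<beta>) k (count (mset w) n) w {#}"
proof (induction "length w" arbitrary: w \<beta> k rule: less_induct)
  case less
  let ?cw = "\<lambda>j. cmod (c j)"
  show ?case
  proof (cases w)
    case Nil
    then show ?thesis using base[OF less.prems(2)] by simp
  next
    case (Cons y ys)
    have y: "y \<in> {1..n}" and ys: "set ys \<subseteq> {1..n}"
      using less.prems Cons by auto
    have \<beta>: "set \<beta> \<subseteq> {1..n}"
      using less.prems(2) by (auto simp: subset_iff)
    define \<kappa> where "\<kappa> = count (mset ys) n"
    show ?thesis
    proof (cases "y = n")
      case False
      then have "set (y # \<beta>) \<subseteq> {1..n-1}" using y less.prems(2) by auto
      then have "pairing u (y # \<beta>) ys k \<le> contraction_bound n ?cw P (mset (y # \<beta>)) k \<kappa> ys {#}"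
        unfolding \<kappa>_def using less.hyps[of ys "y # \<beta>"] Cons ys by simp
      also have "\<dots> \<le> contraction_bound n ?cw P (mset \<beta>) k \<kappa> (y # ys) {#}"
        using False contraction_bound_nonneg[of ?cw P n "mset \<beta>" k \<kappa> ys "{#y#}"] P_nonneg by simp
      finally show ?thesis
        using False Cons pairing_Cons[OF u y \<beta> ys] by (simp add: \<kappa>_def)
    next
      case True
      have IH_removed: "commutator_coeff n ?cw ys p * pairing u \<beta> (remove_nth p ys) k
          \<le> commutator_coeff n ?cw ys p * contraction_bound n ?cw P (mset \<beta>) k \<kappa> (remove_nth p ys) {#}"
        if p: "p < length ys" for p
      proof (cases "ys ! p = n")
        case False
        then have "count (mset (remove_nth p ys)) n = \<kappa>"
          using p by (simp add: mset_remove_nth \<kappa>_def)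
        then have "pairing u \<beta> (remove_nth p ys) k \<le> contraction_bound n ?cw P (mset \<beta>) k \<kappa> (remove_nth p ys) {#}"
          using less.hyps[of "remove_nth p ys"] p Cons ys less.prems(2) set_remove_nth_subset[of p ys]
          by (simp add: length_remove_nth)
        then show ?thesis by (simp add: commutator_coeff_def mult_left_mono)
      qed (simp add: commutator_coeff_def)
      have "pairing u \<beta> w k \<le> pairing u \<beta> ys (Suc k)
          + (\<Sum>p<length ys. commutator_coeff n ?cw ys p * pairing u \<beta> (remove_nth p ys) k)"
        using pairing_Cons_n_le[OF u \<beta> ys] True Cons by simp
      also have "\<dots> \<le> contraction_bound n ?cw P (mset \<beta>) (Suc k) \<kappa> ys {#}
          + (\<Sum>p<length ys. commutator_coeff n ?cw ys p * contraction_bound n ?cw P (mset \<beta>) k \<kappa> (remove_nth p ys) {#})"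
        using less.hyps[of ys \<beta> "Suc k"] Cons ys less.prems(2) IH_removed
        by (intro add_mono sum_mono) (auto simp: \<kappa>_def)
      also have "\<dots> = contraction_bound n ?cw P (mset \<beta>) k (count (mset w) n) w {#}"
        using contraction_bound_Suc[of n ?cw P "mset \<beta>" k \<kappa> ys "{#}"] True Cons by (simp add: \<kappa>_def)
      finally show ?thesis .
    qed
  qed
qed

end

section \<open>Weight sequences\<close>

lemma cond_A1_ratio_mono:
  fixes a :: "nat \<Rightarrow> real"
  assumes pos: "\<And>p. a p > 0" and A1: "cond_A1 a" and "i \<le> j"
  shows "a (Suc i) * a j \<le> a i * a (Suc j)"
  using \<open>i \<le> j\<close>
proof (induction j rule: dec_induct)
  case base
  then show ?case by (simp add: mult.commute)
next
  case (step j)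
  have convex: "(a (Suc j))\<^sup>2 \<le> a j * a (Suc (Suc j))"
    using A1 unfolding cond_A1_def by (metis Suc_eq_plus1 diff_Suc_1 le_add2)
  have "a (Suc i) * a (Suc j) * a j = (a (Suc i) * a j) * a (Suc j)" by (simp add: algebra_simps)
  also have "\<dots> \<le> (a i * a (Suc j)) * a (Suc j)"
    using step.IH pos by (intro mult_right_mono) (auto intro: less_imp_le)
  also have "\<dots> = a i * (a (Suc j))\<^sup>2" by (simp add: power2_eq_square)
  also have "\<dots> \<le> a i * (a j * a (Suc (Suc j)))"
    using convex pos by (intro mult_left_mono) (auto intro: less_imp_le)
  finally show ?case using pos[of j] by (simp add: algebra_simps)
qed

lemma cond_A1_mult_le:
  fixes a :: "nat \<Rightarrow> real"
  assumes pos: "\<And>p. a p > 0" and A1: "cond_A1 a" and a0: "a 0 = 1"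
  shows "a p * a q \<le> a (p + q)"
proof (induction p)
  case 0
  then show ?case using a0 by simp
next
  case (Suc p)
  have "a (Suc p) * a q * a p \<le> a (Suc p) * a (p + q)"
    using Suc.IH pos by (simp add: mult_left_mono less_imp_le algebra_simps)
  also have "\<dots> \<le> a p * a (Suc (p + q))"
    using cond_A1_ratio_mono[OF pos A1] by simp
  finally show ?case using pos[of p] by (simp add: algebra_simps)
qed

lemma cond_A1_prod_le:
  fixes a :: "nat \<Rightarrow> real"
  assumes pos: "\<And>p. a p > 0" and A1: "cond_A1 a" and a0: "a 0 = 1"
  shows "(\<Prod>j\<in>J. a (f j)) \<le> a (sum f J)"
proof (induction J rule: infinite_finite_induct)
  case (insert i J)
  then have "(\<Prod>j\<in>insert i J. a (f j)) \<le> a (f i) * a (sum f J)"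
    using pos by (simp add: mult_left_mono less_imp_le)
  also have "\<dots> \<le> a (f i + sum f J)" by (rule cond_A1_mult_le[OF pos A1 a0])
  finally show ?case using insert.hyps by simp
qed (simp_all add: a0)

lemma cond_A3_fact_le:
  fixes a b :: "nat \<Rightarrow> real"
  assumes "a 0 = 1" "b 0 = 1" and L: "L \<ge> 1"
    and A3: "\<forall>p\<ge>1. real p * a (p - 1) * b (p - 1) \<le> L * a p * b p"
  shows "fact r \<le> L ^ r * a r * b r"
proof (induction r)
  case 0
  then show ?case using assms by simp
next
  case (Suc r)
  have "(fact (Suc r) :: real) = real (Suc r) * fact r" by simp
  also have "\<dots> \<le> real (Suc r) * (L ^ r * a r * b r)"
    using Suc.IH by (intro mult_left_mono) auto
  also have "\<dots> = L ^ r * (real (Suc r) * a r * b r)" by (simp add: algebra_simps)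
  also have "\<dots> \<le> L ^ r * (L * a (Suc r) * b (Suc r))"
    using A3[rule_format, of "Suc r"] L by (intro mult_left_mono) auto
  finally show ?case by (simp add: algebra_simps)
qed

lemma fact_sum_le:
  assumes "finite J"
  shows "(fact (sum f J) :: real) \<le> 2 ^ (card J * sum f J) * (\<Prod>j\<in>J. fact (f j))"
  using assms
proof (induction J rule: finite_induct)
  case empty
  then show ?case by simp
next
  case (insert i J)
  define S where "S = sum f J"
  have "fact (f i) * fact S * (f i + S choose f i) = (fact (f i + S) :: nat)"
    using binomial_fact_lemma[of "f i" "f i + S"] by simp
  from arg_cong[OF this, of real]
  have "(fact (f i + S) :: real) = real (f i + S choose f i) * fact (f i) * fact S"
    by (simp add: algebra_simps)
  also have "\<dots> \<le> 2 ^ (f i + S) * fact (f i) * (2 ^ (card J * S) * (\<Prod>j\<in>J. fact (f j)))"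
  proof (intro mult_mono)
    show "real (f i + S choose f i) \<le> 2 ^ (f i + S)"
      using binomial_le_pow2[of "f i + S" "f i"] by (metis of_nat_le_iff of_nat_numeral of_nat_power)
  qed (use insert.IH in \<open>auto simp: S_def\<close>)
  also have "\<dots> = 2 ^ (f i + S + card J * S) * (\<Prod>j\<in>insert i J. fact (f j))"
    using insert.hyps by (simp add: power_add algebra_simps)
  also have "\<dots> \<le> 2 ^ (card (insert i J) * sum f (insert i J)) * (\<Prod>j\<in>insert i J. fact (f j))"
    using insert.hyps by (intro mult_right_mono power_increasing) (auto simp: S_def algebra_simps prod_nonneg)
  finally show ?case using insert.hyps by (simp add: S_def)
qed

lemma size_eq_sum_count:
  assumes "finite J" "set_mset R \<subseteq> J"
  shows "size R = (\<Sum>j\<in>J. count R j)"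
  unfolding size_multiset_overloaded_eq using assms
  by (intro sum.mono_neutral_left) (auto simp: count_eq_zero_iff)

lemma cond_A2_prod_double_le:
  fixes f :: "nat \<Rightarrow> nat \<Rightarrow> real"
  assumes pos: "\<And>j p. j \<in> I \<Longrightarrow> f j p > 0"
    and A2: "\<And>j p q. j \<in> I \<Longrightarrow> f j (p + q) \<le> H ^ (p + q) * f j p * f j q"
  shows "(\<Prod>j\<in>I. f j (2 * a j)) \<le> H ^ (2 * sum a I) * (\<Prod>j\<in>I. f j (a j))\<^sup>2"
proof -
  have "(\<Prod>j\<in>I. f j (2 * a j)) \<le> (\<Prod>j\<in>I. H ^ (2 * a j) * (f j (a j))\<^sup>2)"
    using pos A2[of _ "a _" "a _"]
    by (intro prod_mono) (auto simp: mult_2 power2_eq_square mult.assoc less_imp_le)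
  also have "\<dots> = H ^ (2 * sum a I) * (\<Prod>j\<in>I. f j (a j))\<^sup>2"
    by (simp add: prod.distrib power_sum prod_power_distrib sum_distrib_left)
  finally show ?thesis .
qed

text \<open>The sequences \<open>m\<^sub>j\<close>, \<open>j \<in> J\<close>, and \<open>M\<close> play the roles of \<open>m\<^sup>(\<^sup>j\<^sup>)\<close>, \<open>j < n\<close>, and
\<open>m\<^sup>(\<^sup>n\<^sup>)\<close>; \<open>L\<close> is a constant for (A3) common to all pairs.\<close>
locale weight_family =
  fixes J :: "nat set" and m :: "nat \<Rightarrow> nat \<Rightarrow> real" and M :: "nat \<Rightarrow> real" and L :: real
  assumes finite_J: "finite J"
    and m_pos: "\<And>j p. j \<in> J \<Longrightarrow> m j p > 0"
    and m_0: "\<And>j. j \<in> J \<Longrightarrow> m j 0 = 1"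
    and m_A1: "\<And>j. j \<in> J \<Longrightarrow> cond_A1 (m j)"
    and M_pos: "\<And>p. M p > 0"
    and M_0: "M 0 = 1"
    and M_A1: "cond_A1 M"
    and L_ge_1: "L \<ge> 1"
    and A3: "\<And>j. j \<in> J \<Longrightarrow> \<forall>p\<ge>1. real p * m j (p - 1) * M (p - 1) \<le> L * m j p * M p"
begin

definition multi_weight :: "nat multiset \<Rightarrow> real" where
  "multi_weight B = (\<Prod>j\<in>J. m j (count B j))"

lemma multi_weight_pos: "multi_weight B > 0"
  unfolding multi_weight_def using m_pos by (intro prod_pos) auto

lemma multi_weight_mult_le: "multi_weight B * multi_weight R \<le> multi_weight (B + R)"
  unfolding multi_weight_def prod.distrib[symmetric]
  using cond_A1_mult_le[OF m_pos m_A1 m_0] m_pos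
  by (intro prod_mono) (auto simp: less_imp_le)

lemma fact_size_le:
  assumes R: "set_mset R \<subseteq> J"
  shows "fact (size R) \<le> (2 ^ card J * L) ^ size R * multi_weight R * M (size R)"
proof -
  define s where "s = size R"
  have s: "s = (\<Sum>j\<in>J. count R j)" unfolding s_def by (rule size_eq_sum_count[OF finite_J R])
  have "(fact s :: real) \<le> 2 ^ (card J * s) * (\<Prod>j\<in>J. fact (count R j))"
    unfolding s by (rule fact_sum_le[OF finite_J])
  also have "(\<Prod>j\<in>J. fact (count R j)) \<le> (\<Prod>j\<in>J. L ^ count R j * m j (count R j) * M (count R j))"
    using cond_A3_fact_le[OF m_0 M_0 L_ge_1 A3] by (intro prod_mono) auto
  also have "\<dots> = L ^ s * multi_weight R * (\<Prod>j\<in>J. M (count R j))"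
    unfolding s multi_weight_def by (simp add: prod.distrib power_sum)
  also have "\<dots> \<le> L ^ s * multi_weight R * M s"
    unfolding s using L_ge_1 multi_weight_pos[of R] cond_A1_prod_le[OF M_pos M_A1 M_0]
    by (intro mult_left_mono) auto
  finally have "(fact s :: real) \<le> 2 ^ (card J * s) * (L ^ s * multi_weight R * M s)"
    by (simp add: mult_left_mono)
  moreover have "(2::real) ^ (card J * s) = (2 ^ card J) ^ s" by (simp add: power_mult)
  ultimately show ?thesis unfolding s_def by (simp add: power_mult_distrib algebra_simps)
qed

text \<open>Contracting the letters \<open>R\<close> against as many letters \<open>n\<close> costs at most \<open>A\<^sup>2\<close> per letter.\<close>
lemma fact_mult_weight_le:
  assumes R: "set_mset R \<subseteq> J" and "size R \<le> K" and "cm \<ge> 0"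
    and A: "2 ^ card J * L * cm \<le> A\<^sup>2"
  shows "fact (size R) * cm ^ size R * (multi_weight B * M (K - size R))
    \<le> A ^ (2 * size R) * (multi_weight (B + R) * M K)"
proof -
  define r where "r = size R"
  have nonneg: "0 \<le> multi_weight B * M (K - r)"
    using multi_weight_pos[of B] M_pos[of "K - r"] by simp
  have "fact r * cm ^ r \<le> (2 ^ card J * L) ^ r * multi_weight R * M r * cm ^ r"
    using fact_size_le[OF R] \<open>cm \<ge> 0\<close> by (simp add: r_def mult_right_mono)
  also have "\<dots> = (2 ^ card J * L * cm) ^ r * (multi_weight R * M r)"
    by (simp add: power_mult_distrib)
  also have "\<dots> \<le> (A\<^sup>2) ^ r * (multi_weight R * M r)"
    using A \<open>cm \<ge> 0\<close> L_ge_1 multi_weight_pos[of R] M_pos[of r]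
    by (intro mult_right_mono power_mono) auto
  finally have "fact r * cm ^ r * (multi_weight B * M (K - r))
      \<le> (A\<^sup>2) ^ r * (multi_weight R * M r) * (multi_weight B * M (K - r))"
    using nonneg by (rule mult_right_mono)
  also have "\<dots> = A ^ (2 * r) * ((multi_weight B * multi_weight R) * (M (K - r) * M r))"
    unfolding power_mult by (simp add: algebra_simps)
  also have "\<dots> \<le> A ^ (2 * r) * (multi_weight (B + R) * M K)"
    using multi_weight_mult_le[of B R] cond_A1_mult_le[OF M_pos M_A1 M_0, of "K - r" r] \<open>size R \<le> K\<close>
      multi_weight_pos[of "B + R"] M_pos
    by (intro mult_left_mono mult_mono) (auto simp: r_def less_imp_le)
  finally show ?thesis by (simp add: r_def)
qed

text \<open>The bound \<open>\<parallel>X\<^sub>B u\<parallel> \<parallel>X\<^sub>n\<^sup>K u\<parallel>\<close> for \<open>|\<langle>X\<^sub>B u, X\<^sub>n\<^sup>K u\<rangle>|\<close>.\<close>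
definition pair_weight :: "real \<Rightarrow> real \<Rightarrow> real \<Rightarrow> nat multiset \<Rightarrow> nat \<Rightarrow> real" where
  "pair_weight C1 C2 A B K = C1 * A ^ size B * multi_weight B * (C2 * A ^ K * M K)"

lemma pair_weight_nonneg: "C1 > 0 \<Longrightarrow> C2 > 0 \<Longrightarrow> A > 0 \<Longrightarrow> pair_weight C1 C2 A B K \<ge> 0"
  unfolding pair_weight_def using multi_weight_pos[of B] M_pos[of K] by simp

lemma contraction_term_le:
  assumes C: "C1 > 0" "C2 > 0" and A_pos: "A > 0" and "cm \<ge> 0"
    and cw: "\<And>x. x \<in> J \<Longrightarrow> 0 \<le> cw x \<and> cw x \<le> cm"
    and A: "2 ^ card J * L * cm \<le> A\<^sup>2"
    and B: "set_mset B \<subseteq> J" and R: "set_mset R \<subseteq> J"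
  shows "falling_factorial z (size R) * prod_mset (image_mset cw R) * pair_weight C1 C2 A B (k + z - size R)
    \<le> 2 ^ z * pair_weight C1 C2 A (B + R) (k + z)"
proof (cases "size R \<le> z")
  case False
  then have "falling_factorial z (size R) = 0" by (simp add: falling_factorial_def binomial_eq_0)
  then show ?thesis using pair_weight_nonneg[OF C A_pos] by simp
next
  case True
  define r where "r = size R"
  define K where "K = k + z"
  define T where "T = pair_weight C1 C2 A B (K - r)"
  have "r \<le> K" using True by (simp add: r_def K_def)
  have "falling_factorial z r * prod_mset (image_mset cw R) * T \<le> (2 ^ z * fact r) * cm ^ r * T"
    using falling_factorial_le prod_mset_image_le_power[of R cw cm] cw R
      prod_mset_image_nonneg[of R cw] pair_weight_nonneg[OF C A_pos]
    by (intro mult_right_mono mult_mono) (auto simp: r_def T_def)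
  also have "\<dots> = 2 ^ z * C1 * C2 * A ^ (size B + (K - r)) * (fact r * cm ^ r * (multi_weight B * M (K - r)))"
    by (simp add: T_def pair_weight_def power_add algebra_simps)
  also have "\<dots> \<le> 2 ^ z * C1 * C2 * A ^ (size B + (K - r)) * (A ^ (2 * r) * (multi_weight (B + R) * M K))"
    using fact_mult_weight_le[OF R, of K cm A B] \<open>r \<le> K\<close> \<open>cm \<ge> 0\<close> A C A_pos
    by (intro mult_left_mono) (auto simp: r_def)
  also have "\<dots> = 2 ^ z * pair_weight C1 C2 A (B + R) K"
  proof -
    have "size B + (K - r) + 2 * r = size (B + R) + K" using \<open>r \<le> K\<close> by (simp add: r_def)
    then show ?thesis
      unfolding pair_weight_def by (simp add: power_add[symmetric] algebra_simps)
  qed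
  finally show ?thesis by (simp add: r_def K_def T_def)
qed

end

section \<open>Gevrey-type spaces\<close>

lemma count_idx_eq_count: "count_idx \<alpha> j = count (mset \<alpha>) j"
  by (induction \<alpha>) (auto simp: count_idx_def)

lemma seq_weight_pos: "(\<forall>j\<in>{1..N}. \<forall>p. m j p > 0) \<Longrightarrow> seq_weight N m \<alpha> > 0"
  unfolding seq_weight_def by (intro prod_pos) auto

lemma seq_weight_Nil: "\<forall>j\<in>{1..N}. m j 0 = 1 \<Longrightarrow> seq_weight N m [] = 1"
  unfolding seq_weight_def by (simp add: count_idx_def)

lemma seq_weight_last:
  "n \<ge> 1 \<Longrightarrow> seq_weight n p \<alpha> = seq_weight (n - 1) p \<alpha> * p n (count_idx \<alpha> n)"
proof -
  assume "n \<ge> 1"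
  then have "{1..n} = insert n {1..n-1}" "n \<notin> {1..n-1}" by auto
  then show ?thesis unfolding seq_weight_def by (simp add: mult.commute)
qed

lemma seq_weight_doubled_le:
  assumes pos: "\<forall>j\<in>{1..n}. \<forall>p. m j p > 0"
    and A2: "\<forall>j\<in>{1..n}. \<forall>p q. m j (p + q) \<le> H ^ (p + q) * m j p * m j q"
    and \<alpha>: "set \<alpha> \<subseteq> {1..n}"
  shows "(\<Prod>j\<in>{1..n}. m j (2 * count_idx \<alpha> j)) \<le> H ^ (2 * length \<alpha>) * (seq_weight n m \<alpha>)\<^sup>2"
proof -
  have "length \<alpha> = (\<Sum>j\<in>{1..n}. count_idx \<alpha> j)"
    using size_eq_sum_count[of "{1..n}" "mset \<alpha>"] \<alpha> by (simp add: count_idx_eq_count)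
  then show ?thesis
    unfolding seq_weight_def by (rule ssubst) (rule cond_A2_prod_double_le, use pos A2 in auto)
qed

lemma in_dom_word_const:
  "in_dom_word (\<lambda>_. X j) (\<lambda>_. DX j) \<alpha> u = in_dom_word X DX (replicate (length \<alpha>) j) u"
  by (induction \<alpha>) (auto simp: op_word_const)

lemma multi_indices_1: "\<alpha> \<in> multi_indices 1 \<longleftrightarrow> \<alpha> \<noteq> [] \<and> \<alpha> = replicate (length \<alpha>) 1"
  unfolding multi_indices_def by (auto simp: replicate_length_same subset_iff) (metis in_set_replicate)

lemma seq_weight_1: "seq_weight 1 p (replicate k 1) = p 1 k"
  by (simp add: seq_weight_def count_idx_def)

lemma seq_weight_replicate_last:
  assumes "n \<ge> 1" "\<forall>j\<in>{1..n-1}. m j 0 = 1"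
  shows "seq_weight n m (replicate k n) = m n k"
proof -
  have "seq_weight (n - 1) m (replicate k n) = 1"
    unfolding seq_weight_def using assms(2) by (intro prod.neutral) (auto simp: count_idx_def)
  then show ?thesis using seq_weight_last[OF assms(1)] by (simp add: count_idx_def)
qed

lemma S_space_initial:
  assumes "n \<ge> 1" "m n 0 = 1" "u \<in> S_space n m X DX"
  shows "u \<in> S_space (n - 1) m X DX"
proof -
  have sub: "multi_indices (n - 1) \<subseteq> multi_indices n"
    unfolding multi_indices_def by (auto simp: subset_iff)
  have weight: "seq_weight n m \<alpha> = seq_weight (n - 1) m \<alpha>" if "\<alpha> \<in> multi_indices (n - 1)" for \<alpha>
  proof -
    have "n \<notin> set \<alpha>" using that unfolding multi_indices_def by (auto simp: subset_iff)
    then have "count_idx \<alpha> n = 0" unfolding count_idx_def by (auto simp: filter_empty_conv)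
    then show ?thesis using seq_weight_last[OF assms(1)] assms(2) by simp
  qed
  obtain A C where "A > 0" "C > 0" and dom: "u \<in> C_inf n X DX"
    and bound: "\<forall>\<alpha>\<in>multi_indices n. norm (op_word X \<alpha> u) \<le> C * A ^ length \<alpha> * seq_weight n m \<alpha>"
    using assms(3) unfolding S_space_def by blast
  have "u \<in> C_inf (n - 1) X DX" using dom sub unfolding C_inf_def by blast
  moreover have "\<forall>\<alpha>\<in>multi_indices (n - 1). norm (op_word X \<alpha> u) \<le> C * A ^ length \<alpha> * seq_weight (n - 1) m \<alpha>"
    using bound sub weight by (metis subsetD)
  ultimately show ?thesis using \<open>A > 0\<close> \<open>C > 0\<close> unfolding S_space_def by blast
qed

lemma S_space_last:
  assumes "n \<ge> 1" "\<forall>j\<in>{1..n-1}. m j 0 = 1" "u \<in> S_space n m X DX"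
  shows "u \<in> S_space 1 (\<lambda>_. m n) (\<lambda>_. X n) (\<lambda>_. DX n)"
proof -
  have word: "replicate (length \<alpha>) n \<in> multi_indices n" if "\<alpha> \<in> multi_indices 1" for \<alpha> :: "nat list"
    using that assms(1) unfolding multi_indices_def by auto
  have "seq_weight 1 (\<lambda>_. m n) \<alpha> = seq_weight n m (replicate (length \<alpha>) n)"
    if "\<alpha> \<in> multi_indices 1" for \<alpha>
    using that seq_weight_1[of "\<lambda>_. m n"] seq_weight_replicate_last[of n m, OF assms(1,2)]
    by (metis multi_indices_1)
  with assms(3) word show ?thesis
    unfolding S_space_def C_inf_def by (fastforce simp: op_word_const in_dom_word_const)
qed

lemma S_space_bound:
  assumes "u \<in> S_space N p Y DY" "\<forall>j\<in>{1..N}. p j 0 = 1" "\<forall>j\<in>{1..N}. \<forall>k. p j k > 0"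
  obtains A C where "A > 0" "C > 0"
    "\<And>A' \<alpha>. A \<le> A' \<Longrightarrow> set \<alpha> \<subseteq> {1..N} \<Longrightarrow> norm (op_word Y \<alpha> u) \<le> C * A' ^ length \<alpha> * seq_weight N p \<alpha>"
proof -
  obtain A C where A: "A > 0" and C: "C > 0"
    and bound: "\<forall>\<alpha>\<in>multi_indices N. norm (op_word Y \<alpha> u) \<le> C * A ^ length \<alpha> * seq_weight N p \<alpha>"
    using assms(1) unfolding S_space_def by blast
  have "norm (op_word Y \<alpha> u) \<le> max C (norm u) * A' ^ length \<alpha> * seq_weight N p \<alpha>"
    if "A \<le> A'" "set \<alpha> \<subseteq> {1..N}" for A' \<alpha>
  proof (cases "\<alpha> = []")
    case True
    then show ?thesis using seq_weight_Nil[of N p, OF assms(2)] by simp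
  next
    case False
    then have "norm (op_word Y \<alpha> u) \<le> C * A ^ length \<alpha> * seq_weight N p \<alpha>"
      using bound that(2) unfolding multi_indices_def by blast
    also have "\<dots> \<le> max C (norm u) * A' ^ length \<alpha> * seq_weight N p \<alpha>"
      using seq_weight_pos[OF assms(3), of \<alpha>] A C that(1)
      by (intro mult_right_mono mult_mono power_mono) auto
    finally show ?thesis .
  qed
  with that A C show ?thesis by (metis less_max_iff_disj)
qed

lemma cond_A3_uniform:
  fixes m :: "nat \<Rightarrow> nat \<Rightarrow> real"
  assumes "finite J" "\<forall>j\<in>J. cond_A3 (m j) M" "\<forall>j\<in>J. \<forall>p. m j p > 0" "\<forall>p. M p > 0"
  obtains L where "L \<ge> 1" "\<And>j. j \<in> J \<Longrightarrow> \<forall>p\<ge>1. real p * m j (p - 1) * M (p - 1) \<le> L * m j p * M p"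
proof -
  let ?A3 = "\<lambda>L j. \<forall>p\<ge>1. real p * m j (p - 1) * M (p - 1) \<le> L * m j p * M p"
  have mono: "?A3 L' j" if "?A3 L j" "L \<le> L'" "j \<in> J" for L L' j
  proof (intro allI impI)
    fix p :: nat assume "p \<ge> 1"
    then have "real p * m j (p - 1) * M (p - 1) \<le> L * m j p * M p" using that(1) by blast
    also have "\<dots> \<le> L' * m j p * M p"
      using that(2,3) assms(3,4) by (intro mult_right_mono) (auto simp: less_imp_le)
    finally show "real p * m j (p - 1) * M (p - 1) \<le> L' * m j p * M p" .
  qed
  obtain Lj where Lj: "\<forall>j\<in>J. Lj j \<ge> 1 \<and> ?A3 (Lj j) j"
    using bchoice[OF assms(2)[unfolded cond_A3_def]] by blast
  define L where "L = Max (insert 1 (Lj ` J))"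
  have "L \<ge> 1" "\<And>j. j \<in> J \<Longrightarrow> Lj j \<le> L"
    unfolding L_def using assms(1) by auto
  then show ?thesis using that Lj mono by blast
qed

locale commutator_estimates =
  central_commutators n X DX D c + weight_family "{1..n-1}" m "m n" L
  for n :: nat and X :: "nat \<Rightarrow> 'a::complex_hilbert \<Rightarrow> 'a" and DX D c
    and m :: "nat \<Rightarrow> nat \<Rightarrow> real" and L :: real
begin

lemma m_pos_all: "j \<in> {1..n} \<Longrightarrow> m j p > 0"
  using m_pos[of j p] M_pos[of p] by (cases "j = n") auto

lemma multi_weight_eq_seq_weight: "multi_weight (mset \<beta>) = seq_weight (n - 1) m \<beta>"
  unfolding multi_weight_def seq_weight_def by (simp add: count_idx_eq_count)

lemma pairing_Nil_le_pair_weight: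
  assumes "norm (op_word X \<beta> u) \<le> C1 * A ^ length \<beta> * multi_weight (mset \<beta>)"
    and "norm (op_word X (replicate k n) u) \<le> C2 * A ^ k * m n k"
  shows "pairing u \<beta> [] k \<le> pair_weight C1 C2 A (mset \<beta>) k"
proof -
  have "pairing u \<beta> [] k \<le> norm (op_word X \<beta> u) * norm (op_word X (replicate k n) u)"
    unfolding pairing_def by (simp add: norm_cinner_le)
  also have "\<dots> \<le> (C1 * A ^ length \<beta> * multi_weight (mset \<beta>)) * (C2 * A ^ k * m n k)"
    using assms order_trans[OF norm_ge_zero assms(1)] by (intro mult_mono) auto
  finally show ?thesis unfolding pair_weight_def by simp
qed

text \<open>Write \<open>\<parallel>X\<^sub>\<alpha> u\<parallel>\<^sup>2 = |\<langle>u, X\<^bsub>rev \<alpha>\<^esub> X\<^sub>\<alpha> u\<rangle>|\<close> and eliminate the word \<open>rev \<alpha> @ \<alpha>\<close>; the final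
weight counts every letter \<open>j \<noteq> n\<close> of \<open>\<alpha>\<close> twice on the left and every letter \<open>n\<close> twice on the right.\<close>
lemma norm_op_word_square_le:
  assumes u: "u \<in> D" and pos: "A > 0" "C1 > 0" "C2 > 0" "cm \<ge> 0"
    and c_le: "\<forall>j\<in>{1..n-1}. cmod (c j) \<le> cm"
    and A_large: "2 ^ (n - 1) * L * cm \<le> A\<^sup>2"
    and initial: "\<And>\<beta>. set \<beta> \<subseteq> {1..n-1} \<Longrightarrow> norm (op_word X \<beta> u) \<le> C1 * A ^ length \<beta> * multi_weight (mset \<beta>)"
    and last: "\<And>k. norm (op_word X (replicate k n) u) \<le> C2 * A ^ k * m n k"
    and \<alpha>: "set \<alpha> \<subseteq> {1..n}"
  shows "(norm (op_word X \<alpha> u))\<^sup>2 \<le> 16 ^ length \<alpha> *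
    pair_weight C1 C2 A (mset (filter (\<lambda>j. j \<noteq> n) \<alpha>) + mset (filter (\<lambda>j. j \<noteq> n) \<alpha>)) (2 * count_idx \<alpha> n)"
proof -
  let ?J = "{1..n-1}" and ?cw = "\<lambda>j. cmod (c j)" and ?P = "pair_weight C1 C2 A"
  define w where "w = rev \<alpha> @ \<alpha>"
  define z where "z = 2 * count_idx \<alpha> n"
  define B where "B = mset (filter (\<lambda>j. j \<noteq> n) \<alpha>)"
  have w: "set w \<subseteq> {1..n}" using \<alpha> by (simp add: w_def)
  have z: "count (mset w) n = z" by (simp add: w_def z_def count_idx_eq_count)
  have "set w \<subseteq> insert n ?J" using w by auto
  have base: "pairing u \<beta> [] k \<le> ?P (mset \<beta>) k" if "set \<beta> \<subseteq> ?J" for \<beta> k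
    by (rule pairing_Nil_le_pair_weight[OF initial[OF that] last])
  have "(norm (op_word X \<alpha> u))\<^sup>2 = pairing u [] w 0"
    unfolding w_def by (rule norm_op_word_square[OF \<alpha> u])
  also have "\<dots> \<le> contraction_bound n ?cw ?P {#} 0 z w {#}"
    using pairing_le_contraction_bound[OF u base pair_weight_nonneg, of w "[]" 0] pos w z by simp
  also have "\<dots> \<le> 2 ^ length w * (2 ^ z * ?P (B + B) z)"
  proof -
    have term_le: "falling_factorial z (size R) * prod_mset (image_mset ?cw R) * ?P B' (0 + z - size R)
        \<le> 2 ^ z * ?P (B' + R) (0 + z)" if "set_mset B' \<subseteq> ?J" "set_mset R \<subseteq> ?J" for B' R
      using that pos c_le A_large by (intro contraction_term_le) auto
    have "contraction_bound n ?cw ?P {#} 0 z w {#}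
        \<le> 2 ^ length w * (2 ^ z * ?P ({#} + {#} + mset (filter (\<lambda>j. j \<noteq> n) w)) (0 + z))"
      using \<open>set w \<subseteq> insert n ?J\<close> term_le pair_weight_nonneg pos
      by (intro contraction_bound_le) auto
    moreover have "mset (filter (\<lambda>j. j \<noteq> n) w) = B + B" by (simp add: w_def B_def)
    ultimately show ?thesis by simp
  qed
  also have "\<dots> \<le> 16 ^ length \<alpha> * ?P (B + B) z"
  proof -
    have "count_idx \<alpha> n \<le> length \<alpha>" by (simp add: count_idx_def)
    then have "(2::real) ^ z \<le> 4 ^ length \<alpha>"
      by (simp add: z_def power_mult power_increasing)
    moreover have "(2::real) ^ length w = 4 ^ length \<alpha>"
      by (simp add: w_def power_add flip: power_mult_distrib)
    moreover have "(16::real) ^ length \<alpha> = 4 ^ length \<alpha> * 4 ^ length \<alpha>"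
      by (simp flip: power_mult_distrib)
    ultimately have "2 ^ length w * (2 ^ z) \<le> (16::real) ^ length \<alpha>"
      by (simp add: mult_left_mono)
    then show ?thesis
      using pair_weight_nonneg[OF pos(2,3,1), of "B + B" z] by (metis mult.assoc mult_right_mono)
  qed
  finally show ?thesis by (simp add: B_def z_def)
qed

lemma pair_weight_doubled_le:
  assumes A2: "\<forall>j\<in>{1..n}. \<forall>p q. m j (p + q) \<le> H ^ (p + q) * m j p * m j q"
    and pos: "A > 0" "C1 > 0" "C2 > 0" and \<alpha>: "set \<alpha> \<subseteq> {1..n}"
  shows "pair_weight C1 C2 A (mset (filter (\<lambda>j. j \<noteq> n) \<alpha>) + mset (filter (\<lambda>j. j \<noteq> n) \<alpha>)) (2 * count_idx \<alpha> n)
    \<le> C1 * C2 * A ^ (2 * length \<alpha>) * (H ^ (2 * length \<alpha>) * (seq_weight n m \<alpha>)\<^sup>2)"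
proof -
  define B where "B = mset (filter (\<lambda>j. j \<noteq> n) \<alpha>) + mset (filter (\<lambda>j. j \<noteq> n) \<alpha>)"
  have "length (filter (\<lambda>j. j \<noteq> n) \<alpha>) + count_idx \<alpha> n = length \<alpha>"
    unfolding count_idx_def using sum_length_filter_compl[of "\<lambda>j. j = n" \<alpha>] by simp
  then have size: "size B + 2 * count_idx \<alpha> n = 2 * length \<alpha>"
    unfolding B_def size_union size_mset by linarith
  have "multi_weight B = (\<Prod>j\<in>{1..n-1}. m j (2 * count_idx \<alpha> j))"
    unfolding multi_weight_def B_def by (intro prod.cong) (auto simp: count_idx_eq_count mult_2)
  moreover have "{1..n} = insert n {1..n-1}" "n \<notin> {1..n-1}" using n_pos by auto
  ultimately have "multi_weight B * m n (2 * count_idx \<alpha> n) = (\<Prod>j\<in>{1..n}. m j (2 * count_idx \<alpha> j))"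
    by (simp add: mult.commute)
  also have "\<dots> \<le> H ^ (2 * length \<alpha>) * (seq_weight n m \<alpha>)\<^sup>2"
    using seq_weight_doubled_le[OF _ A2 \<alpha>] m_pos_all by blast
  finally show ?thesis
    unfolding B_def[symmetric] pair_weight_def size[symmetric] using pos
    by (simp add: power_add mult_left_mono algebra_simps)
qed

lemma norm_op_word_le:
  assumes u: "u \<in> D" and pos: "A > 0" "C1 > 0" "C2 > 0" "cm \<ge> 0" "H > 0"
    and c_le: "\<forall>j\<in>{1..n-1}. cmod (c j) \<le> cm"
    and A_large: "2 ^ (n - 1) * L * cm \<le> A\<^sup>2"
    and A2: "\<forall>j\<in>{1..n}. \<forall>p q. m j (p + q) \<le> H ^ (p + q) * m j p * m j q"
    and initial: "\<And>\<beta>. set \<beta> \<subseteq> {1..n-1} \<Longrightarrow> norm (op_word X \<beta> u) \<le> C1 * A ^ length \<beta> * multi_weight (mset \<beta>)"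
    and last: "\<And>k. norm (op_word X (replicate k n) u) \<le> C2 * A ^ k * m n k"
    and \<alpha>: "set \<alpha> \<subseteq> {1..n}"
  shows "norm (op_word X \<alpha> u) \<le> sqrt (C1 * C2) * (4 * A * H) ^ length \<alpha> * seq_weight n m \<alpha>"
proof (rule power2_le_imp_le)
  have "(norm (op_word X \<alpha> u))\<^sup>2 \<le> 16 ^ length \<alpha> * (C1 * C2 * A ^ (2 * length \<alpha>) * (H ^ (2 * length \<alpha>) * (seq_weight n m \<alpha>)\<^sup>2))"
    using norm_op_word_square_le[OF u pos(1-4) c_le A_large initial last \<alpha>] pair_weight_doubled_le[OF A2 pos(1-3) \<alpha>]
    by (smt (verit) mult_left_mono zero_le_power)
  also have "\<dots> = (sqrt (C1 * C2) * (4 * A * H) ^ length \<alpha> * seq_weight n m \<alpha>)\<^sup>2"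
  proof -
    have "sqrt (C1 * C2) * sqrt (C1 * C2) = C1 * C2" using pos by simp
    moreover have "(16::real) ^ length \<alpha> = 4 ^ length \<alpha> * 4 ^ length \<alpha>"
      by (simp flip: power_mult_distrib)
    ultimately show ?thesis by (simp add: power_mult_distrib power_mult power2_eq_square algebra_simps)
  qed
  finally show "(norm (op_word X \<alpha> u))\<^sup>2 \<le> (sqrt (C1 * C2) * (4 * A * H) ^ length \<alpha> * seq_weight n m \<alpha>)\<^sup>2" .
  show "0 \<le> sqrt (C1 * C2) * (4 * A * H) ^ length \<alpha> * seq_weight n m \<alpha>"
    using pos seq_weight_pos[of n m \<alpha>] m_pos_all by (simp add: less_imp_le)
qed

end

lemma (in central_commutators) S_space_of_restrictions:
  assumes pos: "\<forall>j\<in>{1..n}. \<forall>p. m j p > 0" and m0: "\<forall>j\<in>{1..n}. m j 0 = 1"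
    and A1: "\<forall>j\<in>{1..n}. cond_A1 (m j)" and A2: "cond_A2 n m" and A3: "\<forall>j\<in>{1..n-1}. cond_A3 (m j) (m n)"
    and u: "u \<in> D"
    and initial: "u \<in> S_space (n - 1) m X DX"
    and last: "u \<in> S_space 1 (\<lambda>_. m n) (\<lambda>_. X n) (\<lambda>_. DX n)"
  shows "u \<in> S_space n m X DX"
proof -
  have n: "n \<in> {1..n}" using n_pos by simp
  obtain L where "L \<ge> 1" "\<And>j. j \<in> {1..n-1} \<Longrightarrow> \<forall>p\<ge>1. real p * m j (p - 1) * m n (p - 1) \<le> L * m j p * m n p"
    by (rule cond_A3_uniform[of "{1..n-1}" m "m n"]) (use A3 pos n in auto)
  then interpret commutator_estimates n X DX D c m L
    using pos m0 A1 n by unfold_locales auto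
  obtain H where H: "H > 0" "\<forall>j\<in>{1..n}. \<forall>p q. m j (p + q) \<le> H ^ (p + q) * m j p * m j q"
    using A2 unfolding cond_A2_def by blast
  have "\<forall>j\<in>{1..n-1}. m j 0 = 1" "\<forall>j\<in>{1..n-1}. \<forall>p. m j p > 0"
    using m0 pos by auto
  then obtain a1 C1 where a1: "a1 > 0" "C1 > 0" and bound1:
    "\<And>A \<beta>. a1 \<le> A \<Longrightarrow> set \<beta> \<subseteq> {1..n-1} \<Longrightarrow> norm (op_word X \<beta> u) \<le> C1 * A ^ length \<beta> * seq_weight (n - 1) m \<beta>"
    using S_space_bound[OF initial] by blast
  have "\<forall>j\<in>{1..1}. m n 0 = 1" "\<forall>j\<in>{1..1::nat}. \<forall>p. m n p > 0"
    using m0 pos n by auto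
  then obtain a2 C2 where a2: "a2 > 0" "C2 > 0" and bound2:
    "\<And>A \<alpha>. a2 \<le> A \<Longrightarrow> set \<alpha> \<subseteq> {1..1} \<Longrightarrow> norm (op_word (\<lambda>_. X n) \<alpha> u) \<le> C2 * A ^ length \<alpha> * seq_weight 1 (\<lambda>_. m n) \<alpha>"
    using S_space_bound[OF last] by blast
  define cm where "cm = (\<Sum>j\<in>{1..n-1}. cmod (c j))"
  define A where "A = max (max a1 a2) (sqrt (2 ^ (n - 1) * L * cm))"
  have "cm \<ge> 0" by (simp add: cm_def sum_nonneg)
  have c_le: "\<forall>j\<in>{1..n-1}. cmod (c j) \<le> cm"
    unfolding cm_def by (auto intro: member_le_sum)
  have A: "A > 0" "a1 \<le> A" "a2 \<le> A" using a1 unfolding A_def by auto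
  have "2 ^ (n - 1) * L * cm \<le> A\<^sup>2"
    using \<open>L \<ge> 1\<close> \<open>cm \<ge> 0\<close> real_sqrt_le_iff[of "2 ^ (n - 1) * L * cm" "A\<^sup>2"] A(1)
    unfolding A_def by (simp add: real_le_rsqrt)
  have "norm (op_word X \<alpha> u) \<le> sqrt (C1 * C2) * (4 * A * H) ^ length \<alpha> * seq_weight n m \<alpha>"
    if "set \<alpha> \<subseteq> {1..n}" for \<alpha>
  proof (rule norm_op_word_le[OF u A(1) a1(2) a2(2) \<open>cm \<ge> 0\<close> H(1) c_le \<open>_ \<le> A\<^sup>2\<close> H(2) _ _ that])
    show "norm (op_word X \<beta> u) \<le> C1 * A ^ length \<beta> * multi_weight (mset \<beta>)" if "set \<beta> \<subseteq> {1..n-1}" for \<beta>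
      unfolding multi_weight_eq_seq_weight by (rule bound1[OF A(2) that])
    show "norm (op_word X (replicate k n) u) \<le> C2 * A ^ k * m n k" for k
      using bound2[OF A(3), of "replicate k 1"] seq_weight_1[of "\<lambda>_. m n" k]
      by (simp add: op_word_const set_replicate_conv_if)
  qed
  moreover have "u \<in> C_inf n X DX"
    unfolding C_inf_def multi_indices_def using in_dom_word_X[OF _ u] by auto
  moreover have "sqrt (C1 * C2) > 0" "4 * A * H > 0" using a1 a2 A H by auto
  ultimately show ?thesis unfolding S_space_def multi_indices_def by blast
qed

theorem proposition2p4:
  fixes n :: nat
    and X :: "nat \<Rightarrow> 'a::complex_hilbert \<Rightarrow> 'a"
    and DX :: "nat \<Rightarrow> 'a set"
    and D :: "'a set"
    and m :: "nat \<Rightarrow> nat \<Rightarrow> real"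
    and c :: "nat \<Rightarrow> complex"
    and u :: 'a
  assumes n2: "n \<ge> 2"
    and herm: "\<forall>j\<in>{1..n}. hermitian_op (X j) (DX j) \<or> skew_hermitian_op (X j) (DX j)"
    and D_sub: "\<forall>j\<in>{1..n}. D \<subseteq> DX j"
    and D_inv: "\<forall>j\<in>{1..n}. X j ` D \<subseteq> D"
    and m_pos: "\<forall>j\<in>{1..n}. \<forall>p. m j p > 0"
    and A0: "\<forall>j\<in>{1..n}. cond_A0 (m j)"
    and A1: "\<forall>j\<in>{1..n}. cond_A1 (m j)"
    and A2: "cond_A2 n m"
    and A3: "\<forall>j\<in>{1..n-1}. cond_A3 (m j) (m n)"
    and comm: "\<forall>j\<in>{1..n-1}. \<forall>v\<in>D. X j (X n v) - X n (X j v) = scaleC (c j) v"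
    and uD: "u \<in> D"
  shows "u \<in> S_space n m X DX \<longleftrightarrow>
         u \<in> S_space (n - 1) m X DX \<inter> S_space 1 (\<lambda>_. m n) (\<lambda>_. X n) (\<lambda>_. DX n)"
proof -
  interpret central_commutators n X DX D c
    using n2 herm D_sub D_inv comm by unfold_locales auto
  have m_0: "\<forall>j\<in>{1..n}. m j 0 = 1" using A0 unfolding cond_A0_def by blast
  then have "\<forall>j\<in>{1..n-1}. m j 0 = 1" "m n 0 = 1" using n_pos by auto
  then show ?thesis
    using S_space_initial[OF n_pos] S_space_last[OF n_pos]
      S_space_of_restrictions[OF m_pos m_0 A1 A2 A3 uD] by blast
qed

end
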